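(* For every $k\ge1$ and every $l\in\{1,\dots,k+1\}$, \[i(\alpha)(\mathcal{F}_{k,l})\subset\mathcal{F}_{k-1,l-1}\qquad\text{and}\qquad X(\mathcal{F}_{k-1,l-1})\subset\mathcal{F}_{k,l}.\]
   Context: Let $n\ge1$, $M=\mathbb{R}^{2n+1}$ with coordinates $(q^1,\dots,q^n,p^1,\dots,p^n,t)$. For $\mu\in\mathbb{R}$, $\mathcal{S}^k_\mu$ denotes the space of smooth functions $S(x,\xi)$ on $M\times\mathbb{R}^{2n+1}$ homogeneous polynomial of degree $k$ in $\xi=(\xi_{q^1},\dots,\xi_{q^n},\xi_{p^1},\dots,\xi_{p^n},\xi_t)$. Fix $\delta\in\mathbb{R}$ and set $R^k=\mathcal{S}^k_{\delta+\frac{k}{n+1}}$ for $k\ge0$, $R^{j}=0$ for $j<0$. Let $E_s=\sum_i(p^i\partial_{p^i}+q^i\partial_{q^i})$, $\langle E_s,\xi\rangle=\sum_i(p^i\xi_{p^i}+q^i\xi_{q^i})$, $D(S)=\sum_i(\xi_{q^i}\partial_{p^i}S-\xi_{p^i}\partial_{q^i}S)+\xi_tE_s(S)-\langle E_s,\xi\rangle\partial_tS$. Operators: $i(\alpha):R^k\to R^{k-1}$, $i(\alpha)(S)=\frac12\big(\sum_i(p^i\partial_{\xi_{q^i}}S-q^i\partial_{\xi_{p^i}}S)-\partial_{\xi_t}S\big)$; $X:R^k\to R^{k+1}$, $X(S)=D(S)+(2(n+1)\delta+k)\xi_tS$. For $k\ge0$, $l\ge0$, $\mathcal{F}_{k,l}=R^k\cap\ker\big(i(\alpha)^l\big)$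 (so $\mathcal{F}_{k,0}=0$ and $\mathcal{F}_{k,k+1}=R^k$). *)

theory Defs
  imports "HOL-Analysis.Analysis"
begin

text \<open>A point of \<open>M = R^(2n+1)\<close> (or a covector \<open>\<xi>\<close>) is a triple (q, p, t)
  with q, p in \<open>real^'n\<close>, t real; here n = CARD('n).\<close>

type_synonym 'n pt = "(real^'n) \<times> (real^'n) \<times> real"

type_synonym 'n sym = "('n pt \<times> 'n pt) \<Rightarrow> real"

definition qc :: "'n pt \<Rightarrow> 'n::finite \<Rightarrow> real" where "qc x i = fst x $ i"
definition pc :: "'n pt \<Rightarrow> 'n::finite \<Rightarrow> real" where "pc x i = fst (snd x) $ i"
definition tc :: "'n pt \<Rightarrow> real" where "tc x = snd (snd x)"

definition pd :: "'a::real_normed_vector \<Rightarrow> ('a \<Rightarrow> real) \<Rightarrow> 'a \<Rightarrow> real" where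
  "pd v f z = deriv (\<lambda>s. f (z + s *\<^sub>R v)) 0"

definition smooth :: "('a::euclidean_space \<Rightarrow> real) \<Rightarrow> bool" where
  "smooth f \<longleftrightarrow> (\<forall>vs. set vs \<subseteq> Basis \<longrightarrow>
      continuous_on UNIV (foldr pd vs f) \<and>
      (\<forall>v\<in>Basis. \<forall>z. (\<lambda>s. foldr pd vs f (z + s *\<^sub>R v)) differentiable (at 0)))"

definition d_q :: "'n::finite \<Rightarrow> 'n pt \<times> 'n pt" where "d_q i = ((axis i 1, 0, 0), 0)"
definition d_p :: "'n::finite \<Rightarrow> 'n pt \<times> 'n pt" where "d_p i = ((0, axis i 1, 0), 0)"
definition d_t :: "'n::finite pt \<times> 'n pt" where "d_t = ((0, 0, 1), 0)"
definition d_xiq :: "'n::finite \<Rightarrow> 'n pt \<times> 'n pt" where "d_xiq i = (0, (axis i 1, 0, 0))"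
definition d_xip :: "'n::finite \<Rightarrow> 'n pt \<times> 'n pt" where "d_xip i = (0, (0, axis i 1, 0))"
definition d_xit :: "'n::finite pt \<times> 'n pt" where "d_xit = (0, (0, 0, 1))"

type_synonym 'n mindex = "('n \<Rightarrow> nat) \<times> ('n \<Rightarrow> nat) \<times> nat"

definition mdeg :: "'n::finite mindex \<Rightarrow> nat" where
  "mdeg a = (\<Sum>i\<in>UNIV. fst a i) + (\<Sum>i\<in>UNIV. fst (snd a) i) + snd (snd a)"

definition monom_xi :: "'n::finite mindex \<Rightarrow> 'n pt \<Rightarrow> real" where
  "monom_xi a \<xi> = (\<Prod>i\<in>UNIV. qc \<xi> i ^ fst a i) * (\<Prod>i\<in>UNIV. pc \<xi> i ^ fst (snd a) i)
                   * tc \<xi> ^ snd (snd a)"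

definition hom_poly_xi :: "nat \<Rightarrow> ('n::finite) sym \<Rightarrow> bool" where
  "hom_poly_xi k S \<longleftrightarrow> (\<forall>x. \<exists>c :: 'n mindex \<Rightarrow> real.
      \<forall>\<xi>. S (x, \<xi>) = (\<Sum>a\<in>{a. mdeg a = k}. c a * monom_xi a \<xi>))"

text \<open>The space \<open>S^k_\<mu>\<close>; as a space of functions it does not depend on the
  weight \<mu> (the weight only enters the module structure).\<close>
definition Sspace :: "nat \<Rightarrow> real \<Rightarrow> ('n::finite) sym set" where
  "Sspace k \<mu> = {S. smooth S \<and> hom_poly_xi k S}"

definition Rsp :: "real \<Rightarrow> nat \<Rightarrow> ('n::finite) sym set" where
  "Rsp \<delta> k = Sspace k (\<delta> + real k / real (CARD('n) + 1))"

definition Es :: "('n::finite) sym \<Rightarrow> 'n sym" where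
  "Es S z = (\<Sum>i\<in>UNIV. pc (fst z) i * pd (d_p i) S z + qc (fst z) i * pd (d_q i) S z)"

definition Es_xi :: "('n::finite) pt \<times> 'n pt \<Rightarrow> real" where
  "Es_xi z = (\<Sum>i\<in>UNIV. pc (fst z) i * pc (snd z) i + qc (fst z) i * qc (snd z) i)"

definition Dop :: "('n::finite) sym \<Rightarrow> 'n sym" where
  "Dop S z = (\<Sum>i\<in>UNIV. qc (snd z) i * pd (d_p i) S z - pc (snd z) i * pd (d_q i) S z)
             + tc (snd z) * Es S z - Es_xi z * pd d_t S z"

definition i_alpha :: "('n::finite) sym \<Rightarrow> 'n sym" where
  "i_alpha S z = (1/2) * ((\<Sum>i\<in>UNIV. pc (fst z) i * pd (d_xiq i) S z
                                      - qc (fst z) i * pd (d_xip i) S z) - pd d_xit S z)"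

text \<open>X on \<open>R^k\<close> (k = degree of the argument).\<close>
definition Xop :: "real \<Rightarrow> nat \<Rightarrow> ('n::finite) sym \<Rightarrow> 'n sym" where
  "Xop \<delta> k S z = Dop S z + (2 * real (CARD('n) + 1) * \<delta> + real k) * tc (snd z) * S z"

definition Fsp :: "real \<Rightarrow> nat \<Rightarrow> nat \<Rightarrow> ('n::finite) sym set" where
  "Fsp \<delta> k l = Rsp \<delta> k \<inter> {S. (i_alpha ^^ l) S = (\<lambda>_. 0)}"

end

theory Submission
  imports Defs
begin

text \<open>Since \<open>i(\<alpha>)\<close> lowers the degree in \<open>\<xi>\<close> by one, the first inclusion is immediate. The
  second rests on the commutation relation \<open>i(\<alpha>) X - X i(\<alpha>) = -(m + (n + 1) \<delta>)\<close> on
  \<open>R^m\<close>: split \<open>i(\<alpha>)\<close> and \<open>D\<close> into first-order pieces, compute their brackets, and sum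
  them using Euler's identity for symbols homogeneous of degree \<open>m\<close> in \<open>\<xi>\<close>. Induction on
  \<open>l\<close> then shows that \<open>i(\<alpha>)^l S = 0\<close> implies \<open>i(\<alpha>)^(l+1) X S = 0\<close>.
  The brackets need \<open>x\<close>- and \<open>\<xi>\<close>-derivatives of \<open>S\<close> to commute. Instead of a general
  theorem on mixed partials this uses that \<open>S (x, -)\<close> lies in a finite-dimensional space of
  polynomials, so that Lagrange interpolation in \<open>\<xi>\<close> separates the variables.\<close>

section \<open>Directional derivatives and smooth functions\<close>

definition differentiable_along :: "'a::real_normed_vector \<Rightarrow> ('a \<Rightarrow> real) \<Rightarrow> 'a \<Rightarrow> bool" where
  "differentiable_along v f z \<longleftrightarrow> (\<lambda>s. f (z + s *\<^sub>R v)) differentiable (at 0)"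

lemma pd_has_real_derivative:
  "differentiable_along v f z \<Longrightarrow> ((\<lambda>s. f (z + s *\<^sub>R v)) has_real_derivative pd v f z) (at 0)"
  unfolding differentiable_along_def pd_def by (simp add: DERIV_deriv_iff_real_differentiable)

lemma differentiable_alongI:
  "((\<lambda>s. f (z + s *\<^sub>R v)) has_real_derivative D) (at 0) \<Longrightarrow> differentiable_along v f z"
  unfolding differentiable_along_def using real_differentiable_def by blast

lemma pd_eqI: "((\<lambda>s. f (z + s *\<^sub>R v)) has_real_derivative D) (at 0) \<Longrightarrow> pd v f z = D"
  unfolding pd_def by (rule DERIV_imp_deriv)

lemma pd_const [simp]: "pd v (\<lambda>z. c) z = 0"
  by (rule pd_eqI) simp

lemma differentiable_along_const [simp]: "differentiable_along v (\<lambda>z. c) z"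
  by (rule differentiable_alongI, rule DERIV_const)

lemma pd_inner: "pd v (\<lambda>z. z \<bullet> w) z = v \<bullet> w"
  by (rule pd_eqI, auto intro!: derivative_eq_intros simp: inner_add_left)

lemma differentiable_along_inner: "differentiable_along v (\<lambda>z. z \<bullet> w) z"
  by (rule differentiable_alongI, auto intro!: derivative_eq_intros simp: inner_add_left)

context
  fixes v z :: "'a::real_normed_vector" and f g :: "'a \<Rightarrow> real"
  assumes f: "differentiable_along v f z" and g: "differentiable_along v g z"
begin

lemma pd_add: "pd v (\<lambda>z. f z + g z) z = pd v f z + pd v g z"
  by (rule pd_eqI, intro DERIV_add pd_has_real_derivative f g)

lemma pd_diff: "pd v (\<lambda>z. f z - g z) z = pd v f z - pd v g z"
  by (rule pd_eqI, intro DERIV_diff pd_has_real_derivative f g)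

lemma pd_mult: "pd v (\<lambda>z. f z * g z) z = pd v f z * g z + f z * pd v g z"
  by (rule pd_eqI, rule DERIV_mult[THEN DERIV_cong]) (auto intro: pd_has_real_derivative f g)

lemma differentiable_along_add: "differentiable_along v (\<lambda>z. f z + g z) z"
  using differentiable_alongI[OF DERIV_add[OF pd_has_real_derivative[OF f] pd_has_real_derivative[OF g]]]
  by simp

lemma differentiable_along_mult: "differentiable_along v (\<lambda>z. f z * g z) z"
  using differentiable_alongI[OF DERIV_mult[OF pd_has_real_derivative[OF f] pd_has_real_derivative[OF g]]]
  by simp

end

lemma pd_sum:
  "finite A \<Longrightarrow> (\<And>j. j \<in> A \<Longrightarrow> differentiable_along v (F j) z) \<Longrightarrow>
    pd v (\<lambda>z. \<Sum>j\<in>A. F j z) z = (\<Sum>j\<in>A. pd v (F j) z)"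
  by (rule pd_eqI, rule DERIV_sum, rule pd_has_real_derivative) auto

lemma smooth_continuous: "smooth f \<Longrightarrow> continuous_on UNIV f"
  unfolding smooth_def by (metis empty_subsetI foldr.simps(1) id_apply list.set(1))

lemma smooth_differentiable_along: "smooth f \<Longrightarrow> v \<in> Basis \<Longrightarrow> differentiable_along v f z"
  unfolding smooth_def differentiable_along_def
  by (metis empty_subsetI foldr.simps(1) id_apply list.set(1))

lemma smooth_pd: "smooth f \<Longrightarrow> v \<in> Basis \<Longrightarrow> smooth (pd v f)"
  unfolding smooth_def
proof (intro allI impI)
  fix vs :: "'a list"
  assume f: "\<forall>vs. set vs \<subseteq> Basis \<longrightarrow> continuous_on UNIV (foldr pd vs f) \<and>
      (\<forall>v\<in>Basis. \<forall>z. (\<lambda>s. foldr pd vs f (z + s *\<^sub>R v)) differentiable at 0)"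
    and "v \<in> Basis" "set vs \<subseteq> Basis"
  then have "set (vs @ [v]) \<subseteq> Basis" by auto
  from f[rule_format, OF this] show "continuous_on UNIV (foldr pd vs (pd v f)) \<and>
      (\<forall>u\<in>Basis. \<forall>z. (\<lambda>s. foldr pd vs (pd v f) (z + s *\<^sub>R u)) differentiable at 0)"
    by simp
qed

lemma smooth_coinduct:
  assumes "Q f"
    and "\<And>g. Q g \<Longrightarrow> continuous_on UNIV g"
    and "\<And>g v z. Q g \<Longrightarrow> v \<in> Basis \<Longrightarrow> differentiable_along v g z"
    and "\<And>g v. Q g \<Longrightarrow> v \<in> Basis \<Longrightarrow> Q (pd v g)"
  shows "smooth f"
  unfolding smooth_def
proof (intro allI impI)
  fix vs :: "'a list" assume "set vs \<subseteq> Basis"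
  then have "Q (foldr pd vs f)" by (induction vs) (auto intro: assms)
  then show "continuous_on UNIV (foldr pd vs f) \<and>
      (\<forall>v\<in>Basis. \<forall>z. (\<lambda>s. foldr pd vs f (z + s *\<^sub>R v)) differentiable at 0)"
    using assms(2,3) unfolding differentiable_along_def by blast
qed

lemma smooth_affine: "smooth (\<lambda>z. z \<bullet> w + c)"
proof (rule smooth_coinduct[where Q="\<lambda>g. \<exists>w c. g = (\<lambda>z. z \<bullet> w + c)"])
  fix g v assume "\<exists>w c. g = (\<lambda>z. z \<bullet> w + c)"
  then obtain w c where g: "g = (\<lambda>z. z \<bullet> w + c)" by blast
  have "pd v g = (\<lambda>z. z \<bullet> 0 + v \<bullet> w)"
    unfolding g by (rule ext, rule pd_eqI, auto intro!: derivative_eq_intros simp: inner_add_left)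
  then show "\<exists>w c. pd v g = (\<lambda>z. z \<bullet> w + c)" by blast
qed (auto intro!: continuous_intros differentiable_along_add differentiable_along_inner)

lemma smooth_const [simp]: "smooth (\<lambda>z. c)"
  using smooth_affine[of 0 c] by simp

lemma smooth_inner: "smooth (\<lambda>z. z \<bullet> w)"
  using smooth_affine[of w 0] by simp

definition sum_of_products :: "(('a \<Rightarrow> real) \<times> ('a \<Rightarrow> real)) list \<Rightarrow> 'a \<Rightarrow> real" where
  "sum_of_products L z = (\<Sum>(f, g)\<leftarrow>L. f z * g z)"

lemma sum_of_products_Cons:
  "sum_of_products ((f, g) # L) = (\<lambda>z. f z * g z + sum_of_products L z)"
  by (simp add: sum_of_products_def fun_eq_iff)

text \<open>Closure under products goes through finite sums of products of smooth functions: by the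
  product rule, unlike single products, this class is closed under partial derivatives.\<close>

lemma sum_of_products_pd:
  fixes L :: "(('a::euclidean_space \<Rightarrow> real) \<times> ('a \<Rightarrow> real)) list"
  assumes "\<forall>(f, g)\<in>set L. smooth f \<and> smooth g" and v: "v \<in> Basis"
  shows "continuous_on UNIV (sum_of_products L) \<and> differentiable_along v (sum_of_products L) z \<and>
     pd v (sum_of_products L) z =
       sum_of_products (concat (map (\<lambda>(f, g). [(pd v f, g), (f, pd v g)]) L)) z"
  using assms(1)
proof (induction L)
  case Nil
  then show ?case by (simp add: sum_of_products_def)
next
  case (Cons fg L)
  obtain f g where fg: "fg = (f, g)" by force
  have "smooth f" "smooth g" using Cons.prems fg by auto
  then have c: "continuous_on UNIV f" "continuous_on UNIV g"
    and d: "differentiable_along v f z" "differentiable_along v g z"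
    using v smooth_continuous smooth_differentiable_along by auto
  have IH: "continuous_on UNIV (sum_of_products L)" "differentiable_along v (sum_of_products L) z"
    "pd v (sum_of_products L) z =
       sum_of_products (concat (map (\<lambda>(f, g). [(pd v f, g), (f, pd v g)]) L)) z"
    using Cons by auto
  have "continuous_on UNIV (\<lambda>z. f z * g z + sum_of_products L z)"
    using IH(1) c by (intro continuous_intros) auto
  moreover have "differentiable_along v (\<lambda>z. f z * g z + sum_of_products L z) z"
    using IH d by (intro differentiable_along_add differentiable_along_mult)
  moreover have "pd v (\<lambda>z. f z * g z + sum_of_products L z) z =
      sum_of_products (concat (map (\<lambda>(f, g). [(pd v f, g), (f, pd v g)]) ((f, g) # L))) z"
    by (simp only: pd_add[OF differentiable_along_mult[OF d] IH(2)] pd_mult[OF d] IH(3))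
      (simp add: sum_of_products_def)
  ultimately show ?case unfolding fg sum_of_products_Cons by blast
qed

lemma smooth_sum_of_products:
  fixes L :: "(('a::euclidean_space \<Rightarrow> real) \<times> ('a \<Rightarrow> real)) list"
  assumes "\<forall>(f, g)\<in>set L. smooth f \<and> smooth g"
  shows "smooth (sum_of_products L)"
proof (rule smooth_coinduct[where
      Q = "\<lambda>h. \<exists>L. (\<forall>(f, g)\<in>set L. smooth f \<and> smooth g) \<and> h = sum_of_products L"])
  fix h :: "'a \<Rightarrow> real" and v :: 'a
  assume "\<exists>L. (\<forall>(f, g)\<in>set L. smooth f \<and> smooth g) \<and> h = sum_of_products L" "v \<in> Basis"
  then obtain L where L: "\<forall>(f, g)\<in>set L. smooth f \<and> smooth g" "h = sum_of_products L" "v \<in> Basis"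
    by blast
  let ?L' = "concat (map (\<lambda>(f, g). [(pd v f, g), (f, pd v g)]) L)"
  have "pd v h = sum_of_products ?L'" using sum_of_products_pd[OF L(1,3)] L(2) by auto
  moreover have "\<forall>(f, g)\<in>set ?L'. smooth f \<and> smooth g" using L by (auto intro: smooth_pd)
  ultimately show "\<exists>L. (\<forall>(f, g)\<in>set L. smooth f \<and> smooth g) \<and> pd v h = sum_of_products L"
    by blast
qed (use assms sum_of_products_pd[OF _ SOME_Basis] sum_of_products_pd in blast)+

lemma smooth_mult: "smooth f \<Longrightarrow> smooth g \<Longrightarrow> smooth (\<lambda>z. f z * g z)"
  using smooth_sum_of_products[of "[(f, g)]"] by (simp add: sum_of_products_def[abs_def])

lemma smooth_add: "smooth f \<Longrightarrow> smooth g \<Longrightarrow> smooth (\<lambda>z. f z + g z)"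
  using smooth_sum_of_products[of "[(f, \<lambda>z. 1), (g, \<lambda>z. 1)]"]
  by (simp add: sum_of_products_def[abs_def])

lemma smooth_diff: "smooth f \<Longrightarrow> smooth g \<Longrightarrow> smooth (\<lambda>z. f z - g z)"
  using smooth_sum_of_products[of "[(f, \<lambda>z. 1), (g, \<lambda>z. -1)]"]
  by (simp add: sum_of_products_def[abs_def])

lemma smooth_sum: "finite A \<Longrightarrow> (\<And>j. j \<in> A \<Longrightarrow> smooth (F j)) \<Longrightarrow> smooth (\<lambda>z. \<Sum>j\<in>A. F j z)"
  by (induction A rule: finite_induct) (auto simp: smooth_add)

section \<open>Finite linear combinations and interpolation\<close>

definition in_span :: "('b \<Rightarrow> real) set \<Rightarrow> ('b \<Rightarrow> real) \<Rightarrow> bool" where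
  "in_span F h \<longleftrightarrow> (\<exists>L. set (map snd L) \<subseteq> F \<and> h = (\<lambda>x. \<Sum>(c, f)\<leftarrow>L. c * f x))"

lemma in_span_induct [consumes 1, case_names zero step]:
  assumes "in_span F h" "P (\<lambda>x. 0)"
    and "\<And>c f g. f \<in> F \<Longrightarrow> in_span F g \<Longrightarrow> P g \<Longrightarrow> P (\<lambda>x. c * f x + g x)"
  shows "P h"
proof -
  obtain L where L: "set (map snd L) \<subseteq> F" "h = (\<lambda>x. \<Sum>(c, f)\<leftarrow>L. c * f x)"
    using assms(1) unfolding in_span_def by blast
  have "in_span F (\<lambda>x. \<Sum>(c, f)\<leftarrow>L. c * f x) \<and> P (\<lambda>x. \<Sum>(c, f)\<leftarrow>L. c * f x)"
    using L(1)
  proof (induction L)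
    case Nil
    then show ?case using assms(2) by (auto simp: in_span_def intro: exI[of _ "[]"])
  next
    case (Cons cf L)
    obtain c f where cf: "cf = (c, f)" by force
    have "in_span F (\<lambda>x. \<Sum>(c, f)\<leftarrow>cf # L. c * f x)"
      unfolding in_span_def using Cons.prems by blast
    moreover have "P (\<lambda>x. \<Sum>(c, f)\<leftarrow>cf # L. c * f x)"
      using Cons assms(3)[of f] by (simp add: cf)
    ultimately show ?case by blast
  qed
  then show ?thesis using L by blast
qed

lemma in_span_zero: "in_span F (\<lambda>x. 0)"
  unfolding in_span_def by (rule exI[of _ "[]"]) auto

lemma in_span_scale_base: "f \<in> F \<Longrightarrow> in_span F (\<lambda>x. c * f x)"
  unfolding in_span_def by (rule exI[of _ "[(c, f)]"]) auto

lemma in_span_base: "f \<in> F \<Longrightarrow> in_span F f"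
  using in_span_scale_base[of f F 1] by simp

lemma in_span_add: "in_span F f \<Longrightarrow> in_span F g \<Longrightarrow> in_span F (\<lambda>x. f x + g x)"
proof -
  assume "in_span F f" "in_span F g"
  then obtain L1 L2 where "set (map snd L1) \<subseteq> F" "f = (\<lambda>x. \<Sum>(c, f)\<leftarrow>L1. c * f x)"
    "set (map snd L2) \<subseteq> F" "g = (\<lambda>x. \<Sum>(c, f)\<leftarrow>L2. c * f x)"
    unfolding in_span_def by blast
  then show ?thesis unfolding in_span_def by (intro exI[of _ "L1 @ L2"]) auto
qed

lemma in_span_scale: "in_span F f \<Longrightarrow> in_span F (\<lambda>x. a * f x)"
proof (induction rule: in_span_induct)
  case (step c f g)
  have "in_span F (\<lambda>x. (a * c) * f x + a * g x)"
    using in_span_add[OF in_span_scale_base[OF step(1)] step(3)] .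
  then show ?case by (simp add: algebra_simps)
qed (simp add: in_span_zero)

lemma in_span_diff: "in_span F f \<Longrightarrow> in_span F g \<Longrightarrow> in_span F (\<lambda>x. f x - g x)"
  using in_span_add[OF _ in_span_scale, of F f g "-1"] by simp

lemma in_span_sum:
  "finite A \<Longrightarrow> (\<And>j. j \<in> A \<Longrightarrow> in_span F (G j)) \<Longrightarrow> in_span F (\<lambda>x. \<Sum>j\<in>A. G j x)"
  by (induction A rule: finite_induct) (auto simp: in_span_zero in_span_add)

lemma in_span_insert: "in_span F f \<Longrightarrow> in_span (insert g F) f"
  unfolding in_span_def by blast

lemma in_span_empty: "in_span {} h \<Longrightarrow> h = (\<lambda>x. 0)"
  by (induction rule: in_span_induct) auto

lemma in_span_insertE:
  assumes "in_span (insert f F) h"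
  obtains c h0 where "in_span F h0" "h = (\<lambda>x. c * f x + h0 x)"
proof -
  from assms have "\<exists>c h0. in_span F h0 \<and> h = (\<lambda>x. c * f x + h0 x)"
  proof (induction rule: in_span_induct)
    case zero
    show ?case by (intro exI[of _ 0] exI[of _ "\<lambda>x. 0"]) (simp add: in_span_zero)
  next
    case (step c' f' g)
    then obtain c h0 where h0: "in_span F h0" "g = (\<lambda>x. c * f x + h0 x)" by blast
    show ?case
    proof (cases "f' = f")
      case True
      then show ?thesis using h0 by (intro exI[of _ "c' + c"] exI[of _ h0]) (auto simp: algebra_simps)
    next
      case False
      then have "in_span F (\<lambda>x. c' * f' x + h0 x)"
        using step h0 by (intro in_span_add in_span_scale_base) auto
      then show ?thesis
        using h0 by (intro exI[of _ c] exI[of _ "\<lambda>x. c' * f' x + h0 x"]) (auto simp: algebra_simps)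
    qed
  qed
  then show ?thesis using that by blast
qed

text \<open>\<open>P\<close> is a finite set of interpolation nodes for the span of \<open>F\<close>, with the Lagrange
  functions \<open>g p\<close>.\<close>

definition interpolation_basis :: "('b \<Rightarrow> real) set \<Rightarrow> 'b set \<Rightarrow> ('b \<Rightarrow> 'b \<Rightarrow> real) \<Rightarrow> bool" where
  "interpolation_basis F P g \<longleftrightarrow> finite P \<and> (\<forall>p\<in>P. in_span F (g p)) \<and>
     (\<forall>p\<in>P. \<forall>p'\<in>P. g p p' = of_bool (p = p')) \<and>
     (\<forall>h. in_span F h \<longrightarrow> (\<forall>x. h x = (\<Sum>p\<in>P. h p * g p x)))"

lemma interpolation_basisD:
  assumes "interpolation_basis F P g"
  shows "finite P" "p \<in> P \<Longrightarrow> in_span F (g p)"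
    "p \<in> P \<Longrightarrow> p' \<in> P \<Longrightarrow> g p p' = of_bool (p = p')"
    "in_span F h \<Longrightarrow> h x = (\<Sum>p\<in>P. h p * g p x)"
  using assms unfolding interpolation_basis_def by blast+

lemma interpolation_basis_empty: "interpolation_basis {} {} (\<lambda>p x. 0)"
  unfolding interpolation_basis_def by (auto dest: in_span_empty)

lemma interpolation_sum_delta:
  fixes h :: "'b \<Rightarrow> real"
  assumes "finite P" "p' \<in> P" "\<forall>p\<in>P. g p p' = of_bool (p = p')"
  shows "(\<Sum>p\<in>P. h p * g p p') = h p'"
proof -
  have "(\<Sum>p\<in>P. h p * g p p') = (\<Sum>p\<in>P. if p = p' then h p else 0)"
    using assms(3) by (intro sum.cong) auto
  also have "\<dots> = h p'" using assms(1,2) by simp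
  finally show ?thesis .
qed

context
  fixes F :: "('b \<Rightarrow> real) set" and P :: "'b set" and g :: "'b \<Rightarrow> 'b \<Rightarrow> real"
    and f :: "'b \<Rightarrow> real" and r :: "'b \<Rightarrow> real"
  assumes basis: "interpolation_basis F P g"
    and r_def: "r = (\<lambda>x. f x - (\<Sum>p\<in>P. f p * g p x))"
begin

lemma in_span_residual: "in_span (insert f F) r"
proof -
  have "in_span F (g p)" if "p \<in> P" for p
    using interpolation_basisD(2)[OF basis that] .
  then have "in_span (insert f F) (\<lambda>x. \<Sum>p\<in>P. f p * g p x)"
    by (intro in_span_sum in_span_scale in_span_insert interpolation_basisD(1)[OF basis])
  with in_span_base[of f] show ?thesis
    unfolding r_def by (rule in_span_diff) simp
qed

lemma residual_nodes: "p \<in> P \<Longrightarrow> r p = 0"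
  using interpolation_basisD(1,3)[OF basis] interpolation_sum_delta[of P p g f] by (simp add: r_def)

text \<open>If the residual of \<open>f\<close> vanishes, \<open>f\<close> already lies in the span of \<open>F\<close>.\<close>

lemma interpolation_basis_insert_dependent:
  assumes "\<forall>x. r x = 0"
  shows "interpolation_basis (insert f F) P g"
  unfolding interpolation_basis_def
proof (intro conjI ballI allI impI)
  show "finite P" "\<And>p. p \<in> P \<Longrightarrow> in_span (insert f F) (g p)"
    "\<And>p p'. p \<in> P \<Longrightarrow> p' \<in> P \<Longrightarrow> g p p' = of_bool (p = p')"
    using interpolation_basisD(1-3)[OF basis] by (auto intro: in_span_insert)
  fix h x assume "in_span (insert f F) h"
  then obtain c h0 where h0: "in_span F h0" "h = (\<lambda>x. c * f x + h0 x)"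
    by (rule in_span_insertE)
  have f: "f y = (\<Sum>p\<in>P. f p * g p y)" for y
    using assms[rule_format, of y] unfolding r_def by simp
  have "h0 x = (\<Sum>p\<in>P. h0 p * g p x)"
    using h0(1) by (rule interpolation_basisD(4)[OF basis])
  then have "h x = c * (\<Sum>p\<in>P. f p * g p x) + (\<Sum>p\<in>P. h0 p * g p x)"
    using f[of x] h0(2) by simp
  also have "\<dots> = (\<Sum>p\<in>P. h p * g p x)"
    by (simp add: h0(2) sum_distrib_left sum.distrib algebra_simps)
  finally show "h x = (\<Sum>p\<in>P. h p * g p x)" .
qed

text \<open>Otherwise a point \<open>q\<close> where the residual does not vanish is a new node: a function
  in the enlarged span that vanishes on \<open>insert q P\<close> is zero, and the old Lagrange functions
  are corrected by multiples of the residual.\<close>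

lemma in_span_insert_vanishing:
  assumes q: "r q \<noteq> 0" and k: "in_span (insert f F) k" and k_nodes: "\<forall>y\<in>insert q P. k y = 0"
  shows "k x = 0"
proof -
  obtain d k0 where dk: "in_span F k0" "k = (\<lambda>x. d * f x + k0 x)"
    using k by (rule in_span_insertE)
  define k1 where "k1 x = k0 x + d * (\<Sum>p\<in>P. f p * g p x)" for x
  have k1_span: "in_span F k1"
    unfolding k1_def[abs_def] using dk interpolation_basisD(1,2)[OF basis]
    by (intro in_span_add in_span_scale in_span_sum) auto
  have k_eq: "k x = d * r x + k1 x" for x
    by (simp add: dk(2) k1_def r_def algebra_simps)
  have "k1 p = 0" if "p \<in> P" for p
    using k_eq[of p] k_nodes residual_nodes[OF that] that by simp
  then have k1_zero: "k1 y = 0" for y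
    using interpolation_basisD(4)[OF basis k1_span, of y] by simp
  have "d = 0" using k_eq[of q] k_nodes k1_zero q by simp
  then show "k x = 0" using k_eq[of x] k1_zero[of x] by simp
qed

lemma interpolation_basis_insert_node:
  assumes q: "r q \<noteq> 0"
  defines "g' \<equiv> \<lambda>y. if y = q then (\<lambda>x. r x / r q) else (\<lambda>x. g y x - g y q * r x / r q)"
  shows "interpolation_basis (insert f F) (insert q P) g'"
  unfolding interpolation_basis_def
proof (intro conjI ballI allI impI)
  note P = interpolation_basisD[OF basis]
  have qP: "q \<notin> P" using q residual_nodes by blast
  show "finite (insert q P)" using P by simp
  show g'_span: "in_span (insert f F) (g' p)" if "p \<in> insert q P" for p
  proof (cases "p = q")
    case True
    then show ?thesis using in_span_scale[OF in_span_residual, of "1 / r q"] by (simp add: g'_def)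
  next
    case False
    then have "in_span (insert f F) (\<lambda>x. g p x - (g p q / r q) * r x)"
      using P(2) that by (intro in_span_diff in_span_scale in_span_residual in_span_insert) auto
    then show ?thesis using False by (simp add: g'_def)
  qed
  show g'_delta: "g' p p' = of_bool (p = p')" if "p \<in> insert q P" "p' \<in> insert q P" for p p'
  proof -
    have "r p' = 0" if "p' \<in> P" using residual_nodes that by blast
    then show ?thesis using that qP q P(3) unfolding g'_def by (cases "p = q"; cases "p' = q") auto
  qed
  fix h x assume h: "in_span (insert f F) h"
  define k where "k y = h y - (\<Sum>p\<in>insert q P. h p * g' p y)" for y
  have "in_span (insert f F) k"
    unfolding k_def[abs_def] using h g'_span P(1) by (intro in_span_diff in_span_sum in_span_scale) auto
  moreover have "\<forall>y\<in>insert q P. k y = 0"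
    using interpolation_sum_delta[of "insert q P" _ g' h] g'_delta P(1) by (simp add: k_def)
  ultimately have "k x = 0" by (rule in_span_insert_vanishing[OF q])
  then show "h x = (\<Sum>p\<in>insert q P. h p * g' p x)" by (simp add: k_def)
qed

end

lemma interpolation_basis_exists:
  assumes "finite F"
  obtains P g where "interpolation_basis F P g"
proof -
  from assms have "\<exists>P g. interpolation_basis F P g"
  proof (induction F rule: finite_induct)
    case empty
    then show ?case using interpolation_basis_empty by blast
  next
    case (insert f F)
    then obtain P g where basis: "interpolation_basis F P g" by blast
    define r where "r = (\<lambda>x. f x - (\<Sum>p\<in>P. f p * g p x))"
    show ?case
    proof (cases "\<forall>x. r x = 0")
      case True
      then show ?thesis using interpolation_basis_insert_dependent[OF basis r_def] by blast
    next
      case False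
      then show ?thesis using interpolation_basis_insert_node[OF basis r_def] by blast
    qed
  qed
  then show ?thesis using that by blast
qed

section \<open>Homogeneous polynomials in \<open>\<xi>\<close>\<close>

definition e_q :: "'n::finite \<Rightarrow> 'n pt" where "e_q i = (axis i 1, 0, 0)"
definition e_p :: "'n::finite \<Rightarrow> 'n pt" where "e_p i = (0, axis i 1, 0)"
definition e_t :: "'n::finite pt" where "e_t = (0, 0, 1)"

lemma Basis_pt: "(Basis :: 'n::finite pt set) = range e_q \<union> range e_p \<union> {e_t}"
  by (auto simp: Basis_prod_def Basis_vec_def e_q_def e_p_def e_t_def zero_prod_def)

lemma pt_directions_Basis [simp]: "e_q i \<in> Basis" "e_p i \<in> Basis" "e_t \<in> Basis"
  by (auto simp: Basis_pt)

lemma coordinates_translate: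
  "qc (\<xi> + s *\<^sub>R e_q i) j = qc \<xi> j + (if j = i then s else 0)"
  "pc (\<xi> + s *\<^sub>R e_q i) j = pc \<xi> j" "tc (\<xi> + s *\<^sub>R e_q i) = tc \<xi>"
  "qc (\<xi> + s *\<^sub>R e_p i) j = qc \<xi> j"
  "pc (\<xi> + s *\<^sub>R e_p i) j = pc \<xi> j + (if j = i then s else 0)" "tc (\<xi> + s *\<^sub>R e_p i) = tc \<xi>"
  "qc (\<xi> + s *\<^sub>R e_t) j = qc \<xi> j" "pc (\<xi> + s *\<^sub>R e_t) j = pc \<xi> j" "tc (\<xi> + s *\<^sub>R e_t) = tc \<xi> + s"
  by (auto simp: qc_def pc_def tc_def e_q_def e_p_def e_t_def axis_def)

definition hom_poly :: "nat \<Rightarrow> ('n::finite pt \<Rightarrow> real) \<Rightarrow> bool" where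
  "hom_poly m f \<longleftrightarrow> in_span (monom_xi ` {a. mdeg a = m}) f"

lemma exponents_le_mdeg:
  fixes a :: "'n::finite mindex"
  shows "fst a i \<le> mdeg a" "fst (snd a) i \<le> mdeg a" "snd (snd a) \<le> mdeg a"
  using member_le_sum[of i UNIV "fst a"] member_le_sum[of i UNIV "fst (snd a)"]
  unfolding mdeg_def by auto

lemma finite_mdeg_eq: "finite {a :: 'n::finite mindex. mdeg a = m}"
proof (rule finite_subset)
  show "{a :: 'n mindex. mdeg a = m} \<subseteq> (Pi\<^sub>E UNIV (\<lambda>_. {..m})) \<times> (Pi\<^sub>E UNIV (\<lambda>_. {..m})) \<times> {..m}"
    using exponents_le_mdeg by (fastforce simp: PiE_UNIV_domain mem_Times_iff)
qed (intro finite_cartesian_product finite_PiE; simp)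

lemma hom_poly_iff_coefficients:
  "hom_poly m f \<longleftrightarrow> (\<exists>c. f = (\<lambda>\<xi>. \<Sum>a\<in>{a. mdeg a = m}. c a * monom_xi a \<xi>))"
  for f :: "'n::finite pt \<Rightarrow> real"
proof
  assume "\<exists>c. f = (\<lambda>\<xi>. \<Sum>a\<in>{a. mdeg a = m}. c a * monom_xi a \<xi>)"
  then show "hom_poly m f"
    unfolding hom_poly_def by (auto intro!: in_span_sum in_span_scale_base finite_mdeg_eq)
next
  assume "hom_poly m f"
  then have "in_span (monom_xi ` {a. mdeg a = m}) f" by (simp add: hom_poly_def)
  then show "\<exists>c. f = (\<lambda>\<xi>. \<Sum>a\<in>{a. mdeg a = m}. c a * monom_xi a \<xi>)"
  proof (induction rule: in_span_induct)
    case zero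
    then show ?case by (intro exI[of _ "\<lambda>a. 0"]) simp
  next
    case (step c0 g h)
    then obtain b c where b: "mdeg b = m" "g = monom_xi b"
      and c: "h = (\<lambda>\<xi>. \<Sum>a\<in>{a. mdeg a = m}. c a * monom_xi a \<xi>)"
      by blast
    have "(\<Sum>a\<in>{a. mdeg a = m}. (c a + (if a = b then c0 else 0)) * monom_xi a \<xi>) =
        (\<Sum>a\<in>{a. mdeg a = m}. c a * monom_xi a \<xi>) + c0 * monom_xi b \<xi>" for \<xi>
      using b(1)
      by (simp add: distrib_right sum.distrib if_distrib[of "\<lambda>x. x * _"] sum.delta[OF finite_mdeg_eq]
          cong: if_cong)
    then have "(\<lambda>\<xi>. c0 * g \<xi> + h \<xi>) =
        (\<lambda>\<xi>. \<Sum>a\<in>{a. mdeg a = m}. (c a + (if a = b then c0 else 0)) * monom_xi a \<xi>)"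
      by (simp add: b(2) c add.commute)
    then show ?case by (rule exI[where x = "\<lambda>a. c a + (if a = b then c0 else 0)"])
  qed
qed

lemma hom_poly_xi_iff: "hom_poly_xi m (S :: 'n::finite sym) \<longleftrightarrow> (\<forall>x. hom_poly m (\<lambda>\<xi>. S (x, \<xi>)))"
  unfolding hom_poly_xi_def hom_poly_iff_coefficients fun_eq_iff ..

lemma hom_poly_add: "hom_poly m f \<Longrightarrow> hom_poly m g \<Longrightarrow> hom_poly m (\<lambda>x. f x + g x)"
  unfolding hom_poly_def by (rule in_span_add)

lemma hom_poly_diff: "hom_poly m f \<Longrightarrow> hom_poly m g \<Longrightarrow> hom_poly m (\<lambda>x. f x - g x)"
  unfolding hom_poly_def by (rule in_span_diff)

lemma hom_poly_scale: "hom_poly m f \<Longrightarrow> hom_poly m (\<lambda>x. c * f x)"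
  unfolding hom_poly_def by (rule in_span_scale)

lemma hom_poly_sum: "(\<And>i. hom_poly m (G i)) \<Longrightarrow> hom_poly m (\<lambda>x. \<Sum>i\<in>(UNIV::'a::finite set). G i x)"
  unfolding hom_poly_def by (rule in_span_sum) auto

text \<open>To differentiate a monomial in one variable, split off the power of that variable;
  the cofactor does not depend on it.\<close>

definition set_exp_q :: "'n::finite \<Rightarrow> nat \<Rightarrow> 'n mindex \<Rightarrow> 'n mindex" where
  "set_exp_q i k a = ((fst a)(i := k), snd a)"
definition set_exp_p :: "'n::finite \<Rightarrow> nat \<Rightarrow> 'n mindex \<Rightarrow> 'n mindex" where
  "set_exp_p i k a = (fst a, (fst (snd a))(i := k), snd (snd a))"
definition set_exp_t :: "nat \<Rightarrow> 'n::finite mindex \<Rightarrow> 'n mindex" where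
  "set_exp_t k a = (fst a, fst (snd a), k)"

definition cofactor_q :: "'n::finite \<Rightarrow> 'n mindex \<Rightarrow> 'n pt \<Rightarrow> real" where
  "cofactor_q i a \<xi> = (\<Prod>j\<in>UNIV-{i}. qc \<xi> j ^ fst a j) * (\<Prod>j\<in>UNIV. pc \<xi> j ^ fst (snd a) j)
     * tc \<xi> ^ snd (snd a)"
definition cofactor_p :: "'n::finite \<Rightarrow> 'n mindex \<Rightarrow> 'n pt \<Rightarrow> real" where
  "cofactor_p i a \<xi> = (\<Prod>j\<in>UNIV. qc \<xi> j ^ fst a j) * (\<Prod>j\<in>UNIV-{i}. pc \<xi> j ^ fst (snd a) j)
     * tc \<xi> ^ snd (snd a)"
definition cofactor_t :: "'n::finite mindex \<Rightarrow> 'n pt \<Rightarrow> real" where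
  "cofactor_t a \<xi> = (\<Prod>j\<in>UNIV. qc \<xi> j ^ fst a j) * (\<Prod>j\<in>UNIV. pc \<xi> j ^ fst (snd a) j)"

lemma monom_xi_split:
  "monom_xi a \<xi> = qc \<xi> i ^ fst a i * cofactor_q i a \<xi>"
  "monom_xi a \<xi> = pc \<xi> i ^ fst (snd a) i * cofactor_p i a \<xi>"
  "monom_xi a \<xi> = tc \<xi> ^ snd (snd a) * cofactor_t a \<xi>"
  unfolding monom_xi_def cofactor_q_def cofactor_p_def cofactor_t_def
  by (simp_all add: prod.remove[of UNIV i] ac_simps)

lemma cofactor_set_exp:
  "cofactor_q i (set_exp_q i k a) = cofactor_q i a"
  "cofactor_p i (set_exp_p i k a) = cofactor_p i a"
  "cofactor_t (set_exp_t k a) = cofactor_t a"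
  unfolding cofactor_q_def cofactor_p_def cofactor_t_def set_exp_q_def set_exp_p_def set_exp_t_def
  by (auto intro!: prod.cong ext)

lemma cofactor_translate:
  "cofactor_q i a (\<xi> + s *\<^sub>R e_q i) = cofactor_q i a \<xi>"
  "cofactor_p i a (\<xi> + s *\<^sub>R e_p i) = cofactor_p i a \<xi>"
  "cofactor_t a (\<xi> + s *\<^sub>R e_t) = cofactor_t a \<xi>"
  unfolding cofactor_q_def cofactor_p_def cofactor_t_def coordinates_translate
  by (auto intro!: prod.cong)

lemma monom_xi_set_exp:
  "monom_xi (set_exp_q i k a) \<xi> = qc \<xi> i ^ k * cofactor_q i a \<xi>"
  "monom_xi (set_exp_p i k a) \<xi> = pc \<xi> i ^ k * cofactor_p i a \<xi>"
  "monom_xi (set_exp_t k a) \<xi> = tc \<xi> ^ k * cofactor_t a \<xi>"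
  using monom_xi_split(1)[of "set_exp_q i k a" \<xi> i] monom_xi_split(2)[of "set_exp_p i k a" \<xi> i]
    monom_xi_split(3)[of "set_exp_t k a" \<xi>]
  by (simp_all add: cofactor_set_exp) (simp_all add: set_exp_q_def set_exp_p_def set_exp_t_def)

lemma sum_fun_upd: "sum (f(i := k)) UNIV + f i = sum f UNIV + (k::nat)" for f :: "'n::finite \<Rightarrow> nat"
  using sum.remove[of UNIV i "f(i := k)"] sum.remove[of UNIV i f]
    sum.cong[of "UNIV - {i}" _ "f(i := k)" f] by simp

lemma mdeg_set_exp:
  "mdeg (set_exp_q i k a) + fst a i = mdeg a + k"
  "mdeg (set_exp_p i k a) + fst (snd a) i = mdeg a + k"
  "mdeg (set_exp_t k a) + snd (snd a) = mdeg a + k"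
  unfolding mdeg_def set_exp_q_def set_exp_p_def set_exp_t_def
  using sum_fun_upd[of "fst a" i k] sum_fun_upd[of "fst (snd a)" i k] by simp_all

lemma monom_xi_has_real_derivative:
  "((\<lambda>s. monom_xi a (\<xi> + s *\<^sub>R e_q i)) has_real_derivative
     real (fst a i) * monom_xi (set_exp_q i (fst a i - 1) a) \<xi>) (at 0)"
  "((\<lambda>s. monom_xi a (\<xi> + s *\<^sub>R e_p i)) has_real_derivative
     real (fst (snd a) i) * monom_xi (set_exp_p i (fst (snd a) i - 1) a) \<xi>) (at 0)"
  "((\<lambda>s. monom_xi a (\<xi> + s *\<^sub>R e_t)) has_real_derivative
     real (snd (snd a)) * monom_xi (set_exp_t (snd (snd a) - 1) a) \<xi>) (at 0)"
proof -
  show "((\<lambda>s. monom_xi a (\<xi> + s *\<^sub>R e_q i)) has_real_derivative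
     real (fst a i) * monom_xi (set_exp_q i (fst a i - 1) a) \<xi>) (at 0)"
    unfolding monom_xi_split(1)[of a _ i] monom_xi_set_exp cofactor_translate coordinates_translate
    by (auto intro!: derivative_eq_intros)
  show "((\<lambda>s. monom_xi a (\<xi> + s *\<^sub>R e_p i)) has_real_derivative
     real (fst (snd a) i) * monom_xi (set_exp_p i (fst (snd a) i - 1) a) \<xi>) (at 0)"
    unfolding monom_xi_split(2)[of a _ i] monom_xi_set_exp cofactor_translate coordinates_translate
    by (auto intro!: derivative_eq_intros)
  show "((\<lambda>s. monom_xi a (\<xi> + s *\<^sub>R e_t)) has_real_derivative
     real (snd (snd a)) * monom_xi (set_exp_t (snd (snd a) - 1) a) \<xi>) (at 0)"
    unfolding monom_xi_split(3)[of a] monom_xi_set_exp cofactor_translate coordinates_translate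
    by (auto intro!: derivative_eq_intros)
qed

lemma coordinate_mult_monom_xi:
  "qc \<xi> i * monom_xi a \<xi> = monom_xi (set_exp_q i (fst a i + 1) a) \<xi>"
  "pc \<xi> i * monom_xi a \<xi> = monom_xi (set_exp_p i (fst (snd a) i + 1) a) \<xi>"
  "tc \<xi> * monom_xi a \<xi> = monom_xi (set_exp_t (snd (snd a) + 1) a) \<xi>"
    apply (simp add: monom_xi_set_exp monom_xi_split(1)[of a _ i])
   apply (simp add: monom_xi_set_exp monom_xi_split(2)[of a _ i])
  apply (simp add: monom_xi_set_exp monom_xi_split(3)[of a])
  done

lemma hom_poly_scaled_monom_xi:
  assumes "0 < k \<Longrightarrow> mdeg b + 1 = m"
  shows "hom_poly (m - 1) (\<lambda>\<xi>. real k * monom_xi b \<xi>)"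
proof (cases "k = 0")
  case True
  then show ?thesis by (simp add: hom_poly_def in_span_zero)
next
  case False
  then have "mdeg b = m - 1" using assms by simp
  then show ?thesis unfolding hom_poly_def by (intro in_span_scale_base) auto
qed

lemma hom_poly_pd_generic:
  fixes w :: "'n::finite pt" and K :: "'n mindex \<Rightarrow> nat" and lower :: "'n mindex \<Rightarrow> 'n mindex"
  assumes D: "\<And>a \<xi>. ((\<lambda>s. monom_xi a (\<xi> + s *\<^sub>R w)) has_real_derivative
      real (K a) * monom_xi (lower a) \<xi>) (at 0)"
    and K: "\<And>a. K a \<le> mdeg a" and lower: "\<And>a. 0 < K a \<Longrightarrow> mdeg (lower a) + 1 = mdeg a"
    and f: "hom_poly m f"
  shows "(\<forall>\<xi>. differentiable_along w f \<xi>) \<and> hom_poly (m - 1) (pd w f) \<and>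
    (m = 0 \<longrightarrow> pd w f = (\<lambda>\<xi>. 0))"
  using f[unfolded hom_poly_def]
proof (induction rule: in_span_induct)
  case zero
  then show ?case by (simp add: hom_poly_def in_span_zero)
next
  case (step c f g)
  then obtain a where a: "mdeg a = m" "f = monom_xi a" by blast
  have df: "differentiable_along w f \<xi>" for \<xi>
    unfolding a(2) by (rule differentiable_alongI[OF D])
  have pf: "pd w f \<xi> = real (K a) * monom_xi (lower a) \<xi>" for \<xi>
    unfolding a(2) by (rule pd_eqI[OF D])
  have dg: "differentiable_along w g \<xi>" for \<xi> using step by blast
  have pd_eq: "pd w (\<lambda>x. c * f x + g x) = (\<lambda>\<xi>. c * (real (K a) * monom_xi (lower a) \<xi>) + pd w g \<xi>)"
    by (rule ext) (simp add: pd_add pd_mult differentiable_along_mult df dg pf)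
  have hK: "hom_poly (m - 1) (\<lambda>\<xi>. real (K a) * monom_xi (lower a) \<xi>)"
    using lower[of a] a(1) by (intro hom_poly_scaled_monom_xi) simp
  have "hom_poly (m - 1) (pd w g)" using step by blast
  then have "hom_poly (m - 1) (pd w (\<lambda>x. c * f x + g x))"
    unfolding pd_eq by (rule hom_poly_add[OF hom_poly_scale[OF hK]])
  moreover have "pd w (\<lambda>x. c * f x + g x) = (\<lambda>\<xi>. 0)" if "m = 0"
  proof -
    have "K a = 0" using K[of a] a(1) that by simp
    moreover have "pd w g = (\<lambda>\<xi>. 0)" using step that by blast
    ultimately show ?thesis unfolding pd_eq by simp
  qed
  moreover have "differentiable_along w (\<lambda>x. c * f x + g x) \<xi>" for \<xi>
    by (intro differentiable_along_add differentiable_along_mult differentiable_along_const df dg)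
  ultimately show ?case by blast
qed

lemma hom_poly_pd_Basis:
  fixes w :: "'n::finite pt"
  assumes "hom_poly m f" "w \<in> Basis"
  shows "(\<forall>\<xi>. differentiable_along w f \<xi>) \<and> hom_poly (m - 1) (pd w f) \<and>
    (m = 0 \<longrightarrow> pd w f = (\<lambda>\<xi>. 0))"
proof -
  consider i where "w = e_q i" | i where "w = e_p i" | "w = e_t"
    using assms(2) unfolding Basis_pt by blast
  then show ?thesis
  proof cases
    case (1 i)
    have "mdeg (set_exp_q i (fst a i - 1) a) + 1 = mdeg a" if "0 < fst a i" for a
      using mdeg_set_exp(1)[of i "fst a i - 1" a] that by simp
    from hom_poly_pd_generic[OF monom_xi_has_real_derivative(1) exponents_le_mdeg(1) this assms(1)]
    show ?thesis unfolding 1 .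
  next
    case (2 i)
    have "mdeg (set_exp_p i (fst (snd a) i - 1) a) + 1 = mdeg a" if "0 < fst (snd a) i" for a
      using mdeg_set_exp(2)[of i "fst (snd a) i - 1" a] that by simp
    from hom_poly_pd_generic[OF monom_xi_has_real_derivative(2) exponents_le_mdeg(2) this assms(1)]
    show ?thesis unfolding 2 .
  next
    case 3
    have "mdeg (set_exp_t (snd (snd a) - 1) a) + 1 = mdeg a" if "0 < snd (snd a)" for a
      using mdeg_set_exp(3)[of "snd (snd a) - 1" a] that by simp
    from hom_poly_pd_generic[OF monom_xi_has_real_derivative(3) exponents_le_mdeg(3) this assms(1)]
    show ?thesis unfolding 3 .
  qed
qed

lemma hom_poly_differentiable_along:
  "hom_poly m f \<Longrightarrow> w \<in> Basis \<Longrightarrow> differentiable_along w f \<xi>"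
  using hom_poly_pd_Basis by blast

lemma hom_poly_pd: "hom_poly m f \<Longrightarrow> w \<in> Basis \<Longrightarrow> hom_poly (m - 1) (pd w f)"
  using hom_poly_pd_Basis by blast

lemma hom_poly_0_pd: "hom_poly 0 f \<Longrightarrow> w \<in> Basis \<Longrightarrow> pd w f \<xi> = 0"
  using hom_poly_pd_Basis by fastforce

lemma hom_poly_mult_generic:
  fixes \<phi> :: "'n::finite pt \<Rightarrow> real"
  assumes raise: "\<And>a \<xi>. \<phi> \<xi> * monom_xi a \<xi> = monom_xi (R a) \<xi>"
    and mdeg_raise: "\<And>a. mdeg (R a) = mdeg a + 1"
    and f: "hom_poly m f"
  shows "hom_poly (Suc m) (\<lambda>\<xi>. \<phi> \<xi> * f \<xi>)"
  using f[unfolded hom_poly_def]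
proof (induction rule: in_span_induct)
  case zero
  then show ?case by (simp add: hom_poly_def in_span_zero)
next
  case (step c f g)
  then obtain a where a: "mdeg a = m" "f = monom_xi a" by blast
  have "hom_poly (Suc m) (\<lambda>\<xi>. c * monom_xi (R a) \<xi> + \<phi> \<xi> * g \<xi>)"
    using step a mdeg_raise unfolding hom_poly_def by (intro in_span_add in_span_scale_base) auto
  moreover have "(\<lambda>\<xi>. \<phi> \<xi> * (c * f \<xi> + g \<xi>)) = (\<lambda>\<xi>. c * monom_xi (R a) \<xi> + \<phi> \<xi> * g \<xi>)"
    by (simp add: a(2) raise[symmetric] algebra_simps)
  ultimately show ?case by simp
qed

lemma hom_poly_mult_coordinate:
  assumes "hom_poly m f"
  shows "hom_poly (Suc m) (\<lambda>\<xi>. qc \<xi> i * f \<xi>)" "hom_poly (Suc m) (\<lambda>\<xi>. pc \<xi> i * f \<xi>)"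
    "hom_poly (Suc m) (\<lambda>\<xi>. tc \<xi> * f \<xi>)"
proof -
  have "mdeg (set_exp_q i (fst a i + 1) a) = mdeg a + 1"
    "mdeg (set_exp_p i (fst (snd a) i + 1) a) = mdeg a + 1"
    "mdeg (set_exp_t (snd (snd a) + 1) a) = mdeg a + 1" for a :: "'a mindex"
    using mdeg_set_exp(1)[of i "fst a i + 1" a] mdeg_set_exp(2)[of i "fst (snd a) i + 1" a]
      mdeg_set_exp(3)[of "snd (snd a) + 1" a] by simp_all
  then show "hom_poly (Suc m) (\<lambda>\<xi>. qc \<xi> i * f \<xi>)" "hom_poly (Suc m) (\<lambda>\<xi>. pc \<xi> i * f \<xi>)"
    "hom_poly (Suc m) (\<lambda>\<xi>. tc \<xi> * f \<xi>)"
    by (intro hom_poly_mult_generic[OF coordinate_mult_monom_xi(1) _ assms]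
        hom_poly_mult_generic[OF coordinate_mult_monom_xi(2) _ assms]
        hom_poly_mult_generic[OF coordinate_mult_monom_xi(3) _ assms]; simp)+
qed

lemma euler_power: "x * (real k * (x ^ (k - 1) * c)) = real k * (x ^ k * c)"
  by (cases k) auto

lemma monom_xi_euler:
  "(\<Sum>i\<in>UNIV. qc \<xi> i * pd (e_q i) (monom_xi a) \<xi> + pc \<xi> i * pd (e_p i) (monom_xi a) \<xi>)
     + tc \<xi> * pd e_t (monom_xi a) \<xi> = real (mdeg a) * monom_xi a \<xi>"
proof -
  have "qc \<xi> i * pd (e_q i) (monom_xi a) \<xi> = real (fst a i) * monom_xi a \<xi>" for i
    unfolding pd_eqI[OF monom_xi_has_real_derivative(1)] monom_xi_set_exp
      monom_xi_split(1)[of a \<xi> i] by (rule euler_power)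
  moreover have "pc \<xi> i * pd (e_p i) (monom_xi a) \<xi> = real (fst (snd a) i) * monom_xi a \<xi>" for i
    unfolding pd_eqI[OF monom_xi_has_real_derivative(2)] monom_xi_set_exp
      monom_xi_split(2)[of a \<xi> i] by (rule euler_power)
  moreover have "tc \<xi> * pd e_t (monom_xi a) \<xi> = real (snd (snd a)) * monom_xi a \<xi>"
    unfolding pd_eqI[OF monom_xi_has_real_derivative(3)] monom_xi_set_exp
      monom_xi_split(3)[of a \<xi>] by (rule euler_power)
  ultimately show ?thesis
    by (simp add: mdeg_def sum.distrib sum_distrib_left algebra_simps)
qed

lemma hom_poly_euler:
  assumes "hom_poly m f"
  shows "(\<Sum>i\<in>UNIV. qc \<xi> i * pd (e_q i) f \<xi> + pc \<xi> i * pd (e_p i) f \<xi>)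
     + tc \<xi> * pd e_t f \<xi> = real m * f \<xi>"
  using assms[unfolded hom_poly_def]
proof (induction rule: in_span_induct)
  case (step c f g)
  then obtain a where a: "mdeg a = m" "f = monom_xi a" by blast
  have "hom_poly m f" "hom_poly m g"
    using step a by (auto simp: hom_poly_def intro: in_span_base)
  then have d: "differentiable_along w f \<xi>" "differentiable_along w g \<xi>" if "w \<in> Basis" for w
    using that by (auto intro: hom_poly_differentiable_along)
  have "(\<Sum>i\<in>UNIV. qc \<xi> i * pd (e_q i) (\<lambda>x. c * f x + g x) \<xi>
        + pc \<xi> i * pd (e_p i) (\<lambda>x. c * f x + g x) \<xi>) + tc \<xi> * pd e_t (\<lambda>x. c * f x + g x) \<xi> =
      c * ((\<Sum>i\<in>UNIV. qc \<xi> i * pd (e_q i) f \<xi> + pc \<xi> i * pd (e_p i) f \<xi>) + tc \<xi> * pd e_t f \<xi>)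
      + ((\<Sum>i\<in>UNIV. qc \<xi> i * pd (e_q i) g \<xi> + pc \<xi> i * pd (e_p i) g \<xi>) + tc \<xi> * pd e_t g \<xi>)"
    by (simp add: pd_add pd_mult differentiable_along_mult d[OF pt_directions_Basis(1)] d[OF pt_directions_Basis(2)]
        d[OF pt_directions_Basis(3)]
        sum.distrib sum_distrib_left algebra_simps)
  also have "\<dots> = c * (real m * f \<xi>) + real m * g \<xi>"
    using step(3) monom_xi_euler[of \<xi> a] a by simp
  finally show ?case by (simp add: algebra_simps)
qed simp

section \<open>Symbols\<close>

lemma d_eqs:
  "d_q i = (e_q i, 0)" "d_p i = (e_p i, 0)" "d_t = (e_t, 0)"
  "d_xiq i = (0, e_q i)" "d_xip i = (0, e_p i)" "d_xit = (0, e_t)"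
  by (simp_all add: d_q_def d_p_def d_t_def d_xiq_def d_xip_def d_xit_def e_q_def e_p_def e_t_def
      zero_prod_def)

lemma Basis_prod_embed:
  "u \<in> Basis \<Longrightarrow> (u, 0::'b::euclidean_space) \<in> (Basis :: ('a::euclidean_space \<times> 'b) set)"
  "v \<in> Basis \<Longrightarrow> (0::'a, v) \<in> (Basis :: ('a \<times> 'b) set)"
  by (simp_all add: Basis_prod_def)

lemma symbol_directions_Basis [simp]:
  "d_q i \<in> Basis" "d_p i \<in> Basis" "d_t \<in> Basis" "d_xiq i \<in> Basis" "d_xip i \<in> Basis" "d_xit \<in> Basis"
  unfolding d_eqs by (auto intro!: Basis_prod_embed simp: Basis_pt)

lemma pd_slice:
  "pd (0, w) S (x, \<xi>) = pd w (\<lambda>\<eta>. S (x, \<eta>)) \<xi>" "pd (v, 0) S (x, \<xi>) = pd v (\<lambda>y. S (y, \<xi>)) x"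
  unfolding pd_def by simp_all

lemma pd_xi_slice: "pd (0, w) S z = pd w (\<lambda>\<eta>. S (fst z, \<eta>)) (snd z)"
  using pd_slice(1)[of w S "fst z" "snd z"] by simp

lemma differentiable_along_slice:
  "differentiable_along (0, w) S (x, \<xi>) = differentiable_along w (\<lambda>\<eta>. S (x, \<eta>)) \<xi>"
  "differentiable_along (v, 0) S (x, \<xi>) = differentiable_along v (\<lambda>y. S (y, \<xi>)) x"
  unfolding differentiable_along_def by simp_all

lemma coordinates_inner:
  "(\<lambda>z::'n::finite pt \<times> 'n pt. qc (fst z) i) = (\<lambda>z. z \<bullet> d_q i)"
  "(\<lambda>z::'n::finite pt \<times> 'n pt. pc (fst z) i) = (\<lambda>z. z \<bullet> d_p i)"
  "(\<lambda>z::'n::finite pt \<times> 'n pt. tc (fst z)) = (\<lambda>z. z \<bullet> d_t)"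
  "(\<lambda>z::'n::finite pt \<times> 'n pt. qc (snd z) i) = (\<lambda>z. z \<bullet> d_xiq i)"
  "(\<lambda>z::'n::finite pt \<times> 'n pt. pc (snd z) i) = (\<lambda>z. z \<bullet> d_xip i)"
  "(\<lambda>z::'n::finite pt \<times> 'n pt. tc (snd z)) = (\<lambda>z. z \<bullet> d_xit)"
  by (auto simp: fun_eq_iff d_q_def d_p_def d_t_def d_xiq_def d_xip_def d_xit_def qc_def pc_def tc_def
      inner_axis inner_prod_def)

lemma smooth_coordinates [simp]:
  "smooth (\<lambda>z::'n::finite pt \<times> 'n pt. qc (fst z) i)" "smooth (\<lambda>z::'n::finite pt \<times> 'n pt. pc (fst z) i)"
  "smooth (\<lambda>z::'n::finite pt \<times> 'n pt. tc (fst z))" "smooth (\<lambda>z::'n::finite pt \<times> 'n pt. qc (snd z) i)"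
  "smooth (\<lambda>z::'n::finite pt \<times> 'n pt. pc (snd z) i)" "smooth (\<lambda>z::'n::finite pt \<times> 'n pt. tc (snd z))"
  unfolding coordinates_inner by (rule smooth_inner)+

lemma pd_coordinates:
  "pd v (\<lambda>z::'n::finite pt \<times> 'n pt. qc (fst z) i) z = v \<bullet> d_q i"
  "pd v (\<lambda>z::'n::finite pt \<times> 'n pt. pc (fst z) i) z = v \<bullet> d_p i"
  "pd v (\<lambda>z::'n::finite pt \<times> 'n pt. tc (fst z)) z = v \<bullet> d_t"
  "pd v (\<lambda>z::'n::finite pt \<times> 'n pt. qc (snd z) i) z = v \<bullet> d_xiq i"
  "pd v (\<lambda>z::'n::finite pt \<times> 'n pt. pc (snd z) i) z = v \<bullet> d_xip i"
  "pd v (\<lambda>z::'n::finite pt \<times> 'n pt. tc (snd z)) z = v \<bullet> d_xit"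
  unfolding coordinates_inner by (rule pd_inner)+

lemma inner_symbol_directions [simp]:
  "d_q i \<bullet> d_q j = of_bool (i = j)" "d_q i \<bullet> d_p j = 0" "d_q i \<bullet> d_t = 0"
  "d_q i \<bullet> d_xiq j = 0" "d_q i \<bullet> d_xip j = 0" "d_q i \<bullet> d_xit = 0"
  "d_p i \<bullet> d_q j = 0" "d_p i \<bullet> d_p j = of_bool (i = j)" "d_p i \<bullet> d_t = 0"
  "d_p i \<bullet> d_xiq j = 0" "d_p i \<bullet> d_xip j = 0" "d_p i \<bullet> d_xit = 0"
  "d_t \<bullet> d_q j = 0" "d_t \<bullet> d_p j = 0" "d_t \<bullet> (d_t::'n::finite pt \<times> 'n pt) = 1"
  "d_t \<bullet> d_xiq j = 0" "d_t \<bullet> d_xip j = 0" "d_t \<bullet> (d_xit::'n::finite pt \<times> 'n pt) = 0"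
  "d_xiq i \<bullet> d_q j = 0" "d_xiq i \<bullet> d_p j = 0" "d_xiq i \<bullet> d_t = 0"
  "d_xiq i \<bullet> d_xiq j = of_bool (i = j)" "d_xiq i \<bullet> d_xip j = 0" "d_xiq i \<bullet> d_xit = 0"
  "d_xip i \<bullet> d_q j = 0" "d_xip i \<bullet> d_p j = 0" "d_xip i \<bullet> d_t = 0"
  "d_xip i \<bullet> d_xiq j = 0" "d_xip i \<bullet> d_xip j = of_bool (i = j)" "d_xip i \<bullet> d_xit = 0"
  "d_xit \<bullet> d_q j = 0" "d_xit \<bullet> d_p j = 0" "d_xit \<bullet> (d_t::'n::finite pt \<times> 'n pt) = 0"
  "d_xit \<bullet> d_xiq j = 0" "d_xit \<bullet> d_xip j = 0" "d_xit \<bullet> (d_xit::'n::finite pt \<times> 'n pt) = 1"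
  by (auto simp: d_q_def d_p_def d_t_def d_xiq_def d_xip_def d_xit_def inner_prod_def inner_axis_axis)

lemma hom_poly_xi_euler:
  assumes "hom_poly_xi m S"
  shows "(\<Sum>i\<in>UNIV. qc (snd z) i * pd (d_xiq i) S z + pc (snd z) i * pd (d_xip i) S z)
     + tc (snd z) * pd d_xit S z = real m * S z"
proof -
  have "hom_poly m (\<lambda>\<xi>. S (fst z, \<xi>))" using assms unfolding hom_poly_xi_iff by blast
  from hom_poly_euler[OF this, of "snd z"] show ?thesis
    by (simp add: d_eqs pd_xi_slice)
qed

text \<open>Lagrange interpolation in \<open>\<xi>\<close> gives \<open>S (x, \<xi>) = (\<Sum>p\<in>P. S (x, p) * g p \<xi>)\<close>, where
  derivatives in \<open>x\<close> and in \<open>\<xi>\<close> act on separate factors.\<close>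

context
  fixes S :: "'n::finite sym" and m :: nat and P :: "'n pt set" and g :: "'n pt \<Rightarrow> 'n pt \<Rightarrow> real"
  assumes smooth: "smooth S" and hom: "hom_poly_xi m S"
    and basis: "interpolation_basis (monom_xi ` {a. mdeg a = m}) P g"
begin

lemma interpolation_symbol: "S (y, \<xi>) = (\<Sum>p\<in>P. S (y, p) * g p \<xi>)"
  using hom interpolation_basisD(4)[OF basis] unfolding hom_poly_xi_iff hom_poly_def by blast

lemma differentiable_along_x: "v \<in> Basis \<Longrightarrow> differentiable_along v (\<lambda>y. S (y, p)) x"
proof -
  assume "v \<in> Basis"
  from smooth_differentiable_along[OF smooth Basis_prod_embed(1)[OF this], of "(x, p)"]
  show ?thesis by (simp add: differentiable_along_slice)
qed

lemma differentiable_along_lagrange: "w \<in> Basis \<Longrightarrow> p \<in> P \<Longrightarrow> differentiable_along w (g p) \<xi>"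
  using interpolation_basisD(2)[OF basis] hom_poly_differentiable_along unfolding hom_poly_def by blast

lemma pd_x_interpolation:
  assumes "v \<in> Basis"
  shows "(\<lambda>\<xi>. pd (v, 0) S (x, \<xi>)) = (\<lambda>\<xi>. \<Sum>p\<in>P. pd (v, 0) S (x, p) * g p \<xi>)"
proof
  fix \<xi>
  have "pd (v, 0) S (x, \<xi>) = pd v (\<lambda>y. \<Sum>p\<in>P. S (y, p) * g p \<xi>) x"
    unfolding pd_slice by (subst interpolation_symbol) (rule refl)
  also have "\<dots> = (\<Sum>p\<in>P. pd v (\<lambda>y. S (y, p)) x * g p \<xi>)"
    using interpolation_basisD(1)[OF basis] differentiable_along_x[OF assms]
    by (simp add: pd_sum pd_mult differentiable_along_mult)
  finally show "pd (v, 0) S (x, \<xi>) = (\<Sum>p\<in>P. pd (v, 0) S (x, p) * g p \<xi>)"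
    by (simp add: pd_slice)
qed

lemma pd_xi_interpolation:
  assumes "w \<in> Basis"
  shows "pd (0, w) S (x, \<xi>) = (\<Sum>p\<in>P. S (x, p) * pd w (g p) \<xi>)"
proof -
  have "pd (0, w) S (x, \<xi>) = pd w (\<lambda>\<eta>. \<Sum>p\<in>P. S (x, p) * g p \<eta>) \<xi>"
    unfolding pd_slice by (subst interpolation_symbol) (rule refl)
  also have "\<dots> = (\<Sum>p\<in>P. S (x, p) * pd w (g p) \<xi>)"
    using interpolation_basisD(1)[OF basis] differentiable_along_lagrange[OF assms]
    by (simp add: pd_sum pd_mult differentiable_along_mult)
  finally show ?thesis .
qed

lemma hom_poly_pd_x:
  assumes "v \<in> Basis"
  shows "hom_poly m (\<lambda>\<xi>. pd (v, 0) S (x, \<xi>))"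
  unfolding pd_x_interpolation[OF assms] hom_poly_def
  using interpolation_basisD(1,2)[OF basis] by (intro in_span_sum in_span_scale)

lemma pd_xi_pd_x_commute:
  assumes v: "v \<in> Basis" and w: "w \<in> Basis"
  shows "pd (0, w) (pd (v, 0) S) (x, \<xi>) = pd (v, 0) (pd (0, w) S) (x, \<xi>)"
proof -
  have "pd (0, w) (pd (v, 0) S) (x, \<xi>) = pd w (\<lambda>\<eta>. \<Sum>p\<in>P. pd (v, 0) S (x, p) * g p \<eta>) \<xi>"
    unfolding pd_slice(1) pd_x_interpolation[OF v] ..
  also have "\<dots> = (\<Sum>p\<in>P. pd (v, 0) S (x, p) * pd w (g p) \<xi>)"
    using interpolation_basisD(1)[OF basis] differentiable_along_lagrange[OF w]
    by (simp add: pd_sum pd_mult differentiable_along_mult)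
  also have "\<dots> = pd v (\<lambda>y. \<Sum>p\<in>P. S (y, p) * pd w (g p) \<xi>) x"
    using interpolation_basisD(1)[OF basis] differentiable_along_x[OF v]
    by (simp add: pd_sum pd_mult differentiable_along_mult pd_slice)
  also have "\<dots> = pd (v, 0) (pd (0, w) S) (x, \<xi>)"
    by (simp only: pd_slice(2) pd_xi_interpolation[OF w])
  finally show ?thesis .
qed

end

lemma symbol_interpolation_basis_exists:
  obtains P g where "interpolation_basis (monom_xi ` {a :: 'n::finite mindex. mdeg a = m}) P g"
  using interpolation_basis_exists[OF finite_imageI[OF finite_mdeg_eq]] by blast

lemma hom_poly_xi_pd_x:
  fixes S :: "'n::finite sym"
  assumes "smooth S" "hom_poly_xi m S" "v \<in> Basis"
  shows "hom_poly_xi m (pd (v, 0) S)"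
proof -
  obtain P g where "interpolation_basis (monom_xi ` {a :: 'n mindex. mdeg a = m}) P g"
    by (rule symbol_interpolation_basis_exists)
  from hom_poly_pd_x[OF assms(1,2) this assms(3)] show ?thesis
    unfolding hom_poly_xi_iff by blast
qed

lemma pd_xi_pd_x_symbol_commute:
  fixes S :: "'n::finite sym"
  assumes "smooth S" "hom_poly_xi m S" "v \<in> Basis" "w \<in> Basis"
  shows "pd (0, w) (pd (v, 0) S) z = pd (v, 0) (pd (0, w) S) z"
proof -
  obtain P g where "interpolation_basis (monom_xi ` {a :: 'n mindex. mdeg a = m}) P g"
    by (rule symbol_interpolation_basis_exists)
  from pd_xi_pd_x_commute[OF assms(1,2) this assms(3,4), of "fst z" "snd z"] show ?thesis
    by simp
qed

section \<open>The operators \<open>i(\<alpha>)\<close> and \<open>X\<close>\<close>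

definition i_alpha_term :: "'n::finite \<Rightarrow> 'n sym \<Rightarrow> 'n sym" where
  "i_alpha_term i S = (\<lambda>z. pc (fst z) i * pd (d_xiq i) S z - qc (fst z) i * pd (d_xip i) S z)"

definition D_term :: "'n::finite \<Rightarrow> 'n sym \<Rightarrow> 'n sym" where
  "D_term j S = (\<lambda>z. qc (snd z) j * pd (d_p j) S z - pc (snd z) j * pd (d_q j) S z
      + tc (snd z) * (pc (fst z) j * pd (d_p j) S z + qc (fst z) j * pd (d_q j) S z)
      - (pc (fst z) j * pc (snd z) j + qc (fst z) j * qc (snd z) j) * pd d_t S z)"

lemma i_alpha_eq_terms: "i_alpha S = (\<lambda>z. (1/2) * ((\<Sum>i\<in>UNIV. i_alpha_term i S z) - pd d_xit S z))"
  by (simp add: fun_eq_iff i_alpha_def i_alpha_term_def)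

lemma Xop_eq_terms:
  "Xop \<delta> k S = (\<lambda>z. (\<Sum>j\<in>UNIV. D_term j S z) + (2 * real (CARD('n) + 1) * \<delta> + real k) * (tc (snd z) * S z))"
  for S :: "'n::finite sym"
  by (simp add: fun_eq_iff Xop_def Dop_def Es_def Es_xi_def D_term_def sum.distrib sum_subtractf
      sum_distrib_left sum_distrib_right algebra_simps)

lemmas smooth_intros = smooth_add smooth_diff smooth_mult smooth_const smooth_coordinates smooth_pd
  symbol_directions_Basis

lemma smooth_i_alpha_term: "smooth S \<Longrightarrow> smooth (i_alpha_term i S)"
  unfolding i_alpha_term_def by (intro smooth_intros)

lemma smooth_D_term: "smooth S \<Longrightarrow> smooth (D_term j S)"
  unfolding D_term_def by (intro smooth_intros)

lemma smooth_i_alpha: "smooth S \<Longrightarrow> smooth (i_alpha S)"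
  unfolding i_alpha_eq_terms by (intro smooth_intros smooth_sum smooth_i_alpha_term) auto

lemma smooth_Xop: "smooth S \<Longrightarrow> smooth (Xop \<delta> k S)"
  unfolding Xop_eq_terms by (intro smooth_intros smooth_sum smooth_D_term) auto

lemma hom_poly_xi_i_alpha:
  assumes "hom_poly_xi m S"
  shows "hom_poly_xi (m - 1) (i_alpha S)"
  unfolding hom_poly_xi_iff
proof
  fix x
  have h: "hom_poly m (\<lambda>\<xi>. S (x, \<xi>))" using assms hom_poly_xi_iff by blast
  have eq: "(\<lambda>\<xi>. i_alpha S (x, \<xi>)) = (\<lambda>\<xi>. (1/2) * ((\<Sum>i\<in>UNIV. pc x i * pd (e_q i) (\<lambda>\<eta>. S (x, \<eta>)) \<xi>
      - qc x i * pd (e_p i) (\<lambda>\<eta>. S (x, \<eta>)) \<xi>) - pd e_t (\<lambda>\<eta>. S (x, \<eta>)) \<xi>))"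
    by (simp add: fun_eq_iff i_alpha_def d_eqs pd_slice)
  show "hom_poly (m - 1) (\<lambda>\<xi>. i_alpha S (x, \<xi>))"
    unfolding eq by (intro hom_poly_scale hom_poly_diff hom_poly_sum hom_poly_pd[OF h] pt_directions_Basis)
qed

lemma hom_poly_xi_Xop:
  fixes S :: "'n::finite sym"
  assumes smooth: "smooth S" and hom: "hom_poly_xi m S"
  shows "hom_poly_xi (Suc m) (Xop \<delta> k S)"
  unfolding hom_poly_xi_iff
proof
  fix x
  have h: "hom_poly m (\<lambda>\<xi>. S (x, \<xi>))" using hom hom_poly_xi_iff by blast
  have "hom_poly m (\<lambda>\<xi>. pd (d_p i) S (x, \<xi>))" "hom_poly m (\<lambda>\<xi>. pd (d_q i) S (x, \<xi>))"
    "hom_poly m (\<lambda>\<xi>. pd d_t S (x, \<xi>))" for i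
    using hom_poly_xi_pd_x[OF smooth hom pt_directions_Basis(1)]
      hom_poly_xi_pd_x[OF smooth hom pt_directions_Basis(2)]
      hom_poly_xi_pd_x[OF smooth hom pt_directions_Basis(3)]
    unfolding hom_poly_xi_iff d_eqs by blast+
  note x_derivs = this[THEN hom_poly_mult_coordinate(1)] this[THEN hom_poly_mult_coordinate(2)]
    this[THEN hom_poly_mult_coordinate(3)]
  let ?c = "2 * real (CARD('n) + 1) * \<delta> + real k"
  have eq: "(\<lambda>\<xi>. Xop \<delta> k S (x, \<xi>)) = (\<lambda>\<xi>.
      (\<Sum>i\<in>UNIV. qc \<xi> i * pd (d_p i) S (x, \<xi>) - pc \<xi> i * pd (d_q i) S (x, \<xi>))
      + (\<Sum>i\<in>UNIV. pc x i * (tc \<xi> * pd (d_p i) S (x, \<xi>)) + qc x i * (tc \<xi> * pd (d_q i) S (x, \<xi>)))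
      - (\<Sum>i\<in>UNIV. pc x i * (pc \<xi> i * pd d_t S (x, \<xi>)) + qc x i * (qc \<xi> i * pd d_t S (x, \<xi>)))
      + ?c * (tc \<xi> * S (x, \<xi>)))"
    by (simp add: fun_eq_iff Xop_def Dop_def Es_def Es_xi_def sum_distrib_left algebra_simps)
  show "hom_poly (Suc m) (\<lambda>\<xi>. Xop \<delta> k S (x, \<xi>))"
    unfolding eq by (intro hom_poly_add hom_poly_diff hom_poly_scale hom_poly_sum x_derivs
        hom_poly_mult_coordinate(3)[OF h])
qed

lemma Rsp_i_alpha: "S \<in> Rsp \<delta> m \<Longrightarrow> i_alpha S \<in> Rsp \<delta> (m - 1)"
  unfolding Rsp_def Sspace_def using smooth_i_alpha hom_poly_xi_i_alpha by blast

lemma Rsp_Xop: "S \<in> Rsp \<delta> m \<Longrightarrow> Xop \<delta> m S \<in> Rsp \<delta> (Suc m)"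
  unfolding Rsp_def Sspace_def using smooth_Xop hom_poly_xi_Xop by blast

lemma i_alpha_hom_poly_xi_0:
  assumes "hom_poly_xi 0 S"
  shows "i_alpha S z = 0"
proof -
  have "hom_poly 0 (\<lambda>\<xi>. S (fst z, \<xi>))" using assms unfolding hom_poly_xi_iff by blast
  from hom_poly_0_pd[OF this] show ?thesis by (simp add: i_alpha_def d_eqs pd_xi_slice)
qed

section \<open>The commutator of \<open>i(\<alpha>)\<close> and \<open>X\<close>\<close>

lemma pd_xi_pd_x_directions_commute:
  assumes "smooth S" "hom_poly_xi m S"
  shows "pd (d_xiq i) (pd (d_q j) S) z = pd (d_q j) (pd (d_xiq i) S) z"
    "pd (d_xiq i) (pd (d_p j) S) z = pd (d_p j) (pd (d_xiq i) S) z"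
    "pd (d_xiq i) (pd d_t S) z = pd d_t (pd (d_xiq i) S) z"
    "pd (d_xip i) (pd (d_q j) S) z = pd (d_q j) (pd (d_xip i) S) z"
    "pd (d_xip i) (pd (d_p j) S) z = pd (d_p j) (pd (d_xip i) S) z"
    "pd (d_xip i) (pd d_t S) z = pd d_t (pd (d_xip i) S) z"
    "pd d_xit (pd (d_q j) S) z = pd (d_q j) (pd d_xit S) z"
    "pd d_xit (pd (d_p j) S) z = pd (d_p j) (pd d_xit S) z"
    "pd d_xit (pd d_t S) z = pd d_t (pd d_xit S) z"
  unfolding d_eqs by (intro pd_xi_pd_x_symbol_commute[OF assms] pt_directions_Basis)+

lemma i_alpha_term_D_term_commutator:
  assumes smooth: "smooth S" and hom: "hom_poly_xi m S"
  shows "i_alpha_term i (D_term j S) z - D_term j (i_alpha_term i S) z =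
    (if i = j then pc (fst z) i * pd (d_p i) S z + qc (fst z) i * pd (d_q i) S z
       - qc (snd z) i * pd (d_xiq i) S z - pc (snd z) i * pd (d_xip i) S z
       - tc (snd z) * i_alpha_term i S z else 0)"
  unfolding i_alpha_term_def D_term_def using smooth
  by (simp add: pd_add pd_diff pd_mult pd_coordinates smooth_differentiable_along smooth_intros
      differentiable_along_mult pd_xi_pd_x_directions_commute[OF smooth hom])
    (auto simp: algebra_simps)

lemma pd_xit_D_term_commutator:
  assumes smooth: "smooth S" and hom: "hom_poly_xi m S"
  shows "pd d_xit (D_term j S) z - D_term j (pd d_xit S) z =
    pc (fst z) j * pd (d_p j) S z + qc (fst z) j * pd (d_q j) S z"
  unfolding D_term_def using smooth
  by (simp add: pd_add pd_diff pd_mult pd_coordinates smooth_differentiable_along smooth_intros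
      differentiable_along_mult pd_xi_pd_x_directions_commute[OF smooth hom])

lemma i_alpha_term_Xop:
  fixes S :: "'n::finite sym"
  assumes smooth: "smooth S"
  shows "i_alpha_term i (Xop \<delta> k S) z = (\<Sum>j\<in>UNIV. i_alpha_term i (D_term j S) z)
    + (2 * real (CARD('n) + 1) * \<delta> + real k) * (tc (snd z) * i_alpha_term i S z)"
proof -
  have "i_alpha_term i (\<lambda>z. tc (snd z) * S z) z = tc (snd z) * i_alpha_term i S z"
    unfolding i_alpha_term_def using smooth
    by (simp add: pd_mult pd_coordinates smooth_differentiable_along smooth_intros algebra_simps)
  moreover have "i_alpha_term i (Xop \<delta> k S) z = (\<Sum>j\<in>UNIV. i_alpha_term i (D_term j S) z)
      + (2 * real (CARD('n) + 1) * \<delta> + real k) * i_alpha_term i (\<lambda>z. tc (snd z) * S z) z"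
    unfolding Xop_eq_terms i_alpha_term_def using smooth
    by (simp add: pd_add pd_sum pd_mult smooth_differentiable_along smooth_intros smooth_D_term
        smooth_sum differentiable_along_mult sum_distrib_left sum_subtractf algebra_simps)
  ultimately show ?thesis by simp
qed

lemma pd_xit_Xop:
  fixes S :: "'n::finite sym"
  assumes smooth: "smooth S"
  shows "pd d_xit (Xop \<delta> k S) z = (\<Sum>j\<in>UNIV. pd d_xit (D_term j S) z)
    + (2 * real (CARD('n) + 1) * \<delta> + real k) * (S z + tc (snd z) * pd d_xit S z)"
proof -
  have "pd d_xit (\<lambda>z. tc (snd z) * S z) z = S z + tc (snd z) * pd d_xit S z"
    using smooth by (simp add: pd_mult pd_coordinates smooth_differentiable_along smooth_intros)
  moreover have "pd d_xit (Xop \<delta> k S) z = (\<Sum>j\<in>UNIV. pd d_xit (D_term j S) z)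
      + (2 * real (CARD('n) + 1) * \<delta> + real k) * pd d_xit (\<lambda>z. tc (snd z) * S z) z"
    unfolding Xop_eq_terms using smooth
    by (simp add: pd_add pd_sum pd_mult smooth_differentiable_along smooth_intros smooth_D_term
        smooth_sum differentiable_along_mult)
  ultimately show ?thesis by simp
qed

lemma D_term_linear:
  assumes "smooth f" "smooth g"
  shows "D_term j (\<lambda>z. a * f z + b * g z) z = a * D_term j f z + b * D_term j g z"
  unfolding D_term_def using assms
  by (simp add: pd_add pd_mult smooth_differentiable_along smooth_intros differentiable_along_mult
      algebra_simps)

lemma D_term_sum:
  fixes F :: "'i::finite \<Rightarrow> 'n::finite sym"
  assumes "\<And>i. smooth (F i)"
  shows "D_term j (\<lambda>z. \<Sum>i\<in>UNIV. F i z) z = (\<Sum>i\<in>UNIV. D_term j (F i) z)"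
proof -
  have "pd v (\<lambda>z. \<Sum>i\<in>UNIV. F i z) z = (\<Sum>i\<in>UNIV. pd v (F i) z)" if "v \<in> Basis" for v
    using assms that by (simp add: pd_sum smooth_differentiable_along)
  then show ?thesis
    unfolding D_term_def by (simp add: sum_distrib_left sum_subtractf sum.distrib algebra_simps)
qed

lemma D_term_i_alpha:
  fixes S :: "'n::finite sym"
  assumes smooth: "smooth S"
  shows "D_term j (i_alpha S) z =
    (1/2) * ((\<Sum>i\<in>UNIV. D_term j (i_alpha_term i S) z) - D_term j (pd d_xit S) z)"
proof -
  have "i_alpha S = (\<lambda>z. (1/2) * (\<Sum>i\<in>UNIV. i_alpha_term i S z) + (- 1/2) * pd d_xit S z)"
    by (simp add: i_alpha_eq_terms algebra_simps)
  moreover have "smooth (\<lambda>z. \<Sum>i\<in>UNIV. i_alpha_term i S z)"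
    using smooth by (intro smooth_sum smooth_i_alpha_term) auto
  ultimately have "D_term j (i_alpha S) z =
      (1/2) * D_term j (\<lambda>z. \<Sum>i\<in>UNIV. i_alpha_term i S z) z + (- 1/2) * D_term j (pd d_xit S) z"
    using smooth by (simp only: D_term_linear smooth_pd symbol_directions_Basis)
  then show ?thesis
    using smooth by (simp add: D_term_sum smooth_i_alpha_term algebra_simps)
qed

lemma i_alpha_Xop_expand:
  fixes S :: "'n::finite sym"
  assumes smooth: "smooth S"
  shows "i_alpha (Xop \<delta> k S) z =
    (1/2) * ((\<Sum>i\<in>UNIV. \<Sum>j\<in>UNIV. i_alpha_term i (D_term j S) z) - (\<Sum>j\<in>UNIV. pd d_xit (D_term j S) z))
    + (2 * real (CARD('n) + 1) * \<delta> + real k) * (tc (snd z) * i_alpha S z - S z / 2)"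
proof -
  define c where "c = 2 * real (CARD('n) + 1) * \<delta> + real k"
  define I where "I = (\<Sum>i\<in>UNIV. i_alpha_term i S z)"
  have I: "I = 2 * i_alpha S z + pd d_xit S z"
    by (simp add: I_def i_alpha_eq_terms field_simps)
  have "i_alpha (Xop \<delta> k S) z =
      (1/2) * (((\<Sum>i\<in>UNIV. \<Sum>j\<in>UNIV. i_alpha_term i (D_term j S) z) + c * tc (snd z) * I)
        - ((\<Sum>j\<in>UNIV. pd d_xit (D_term j S) z) + c * (S z + tc (snd z) * pd d_xit S z)))"
    unfolding i_alpha_eq_terms[of "Xop \<delta> k S"] i_alpha_term_Xop[OF smooth] pd_xit_Xop[OF smooth]
    by (simp add: c_def I_def sum.distrib sum_distrib_left mult.assoc)
  then show ?thesis
    unfolding I c_def[symmetric] by (simp add: algebra_simps)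
qed

lemma Xop_i_alpha_expand:
  fixes S :: "'n::finite sym"
  assumes smooth: "smooth S"
  shows "Xop \<delta> k (i_alpha S) z =
    (1/2) * ((\<Sum>i\<in>UNIV. \<Sum>j\<in>UNIV. D_term j (i_alpha_term i S) z) - (\<Sum>j\<in>UNIV. D_term j (pd d_xit S) z))
    + (2 * real (CARD('n) + 1) * \<delta> + real k) * (tc (snd z) * i_alpha S z)"
proof -
  have "(\<Sum>j\<in>UNIV. \<Sum>i\<in>UNIV. D_term j (i_alpha_term i S) z) =
      (\<Sum>i\<in>UNIV. \<Sum>j\<in>UNIV. D_term j (i_alpha_term i S) z)"
    by (rule sum.swap)
  then show ?thesis
    unfolding Xop_eq_terms[of _ _ "i_alpha S"] D_term_i_alpha[OF smooth]
    by (simp add: sum_subtractf flip: sum_divide_distrib)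
qed

lemma sum_commutators:
  fixes S :: "'n::finite sym"
  assumes smooth: "smooth S" and hom: "hom_poly_xi m S"
  shows "(\<Sum>i\<in>UNIV. \<Sum>j\<in>UNIV. i_alpha_term i (D_term j S) z - D_term j (i_alpha_term i S) z)
    - (\<Sum>j\<in>UNIV. pd d_xit (D_term j S) z - D_term j (pd d_xit S) z)
    = - real m * S z - 2 * tc (snd z) * i_alpha S z"
proof -
  have "(\<Sum>i\<in>UNIV. i_alpha_term i S z) = 2 * i_alpha S z + pd d_xit S z"
    by (simp add: i_alpha_eq_terms field_simps)
  with hom_poly_xi_euler[OF hom, of z] show ?thesis
    by (simp add: i_alpha_term_D_term_commutator[OF smooth hom] pd_xit_D_term_commutator[OF smooth hom]
        sum.distrib sum_subtractf flip: sum_distrib_left) (simp add: algebra_simps)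
qed

text \<open>For \<open>m = 0\<close> the truncated degree \<open>m - 1 = 0\<close> is harmless, since then \<open>i(\<alpha>) S = 0\<close>.\<close>

lemma i_alpha_Xop_commutator:
  fixes S :: "'n::finite sym"
  assumes smooth: "smooth S" and hom: "hom_poly_xi m S"
  shows "i_alpha (Xop \<delta> m S) z = Xop \<delta> (m - 1) (i_alpha S) z - (real m + real CARD('n) * \<delta> + \<delta>) * S z"
proof -
  have shift: "(real m - real (m - 1)) * (tc (snd z) * i_alpha S z) = tc (snd z) * i_alpha S z"
    using i_alpha_hom_poly_xi_0[of S z] hom by (cases m) auto
  have "i_alpha (Xop \<delta> m S) z - Xop \<delta> (m - 1) (i_alpha S) z =
      (1/2) * ((\<Sum>i\<in>UNIV. \<Sum>j\<in>UNIV. i_alpha_term i (D_term j S) z - D_term j (i_alpha_term i S) z)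
        - (\<Sum>j\<in>UNIV. pd d_xit (D_term j S) z - D_term j (pd d_xit S) z))
      + (real m - real (m - 1)) * (tc (snd z) * i_alpha S z)
      - (2 * real (CARD('n) + 1) * \<delta> + real m) / 2 * S z"
    unfolding i_alpha_Xop_expand[OF smooth] Xop_i_alpha_expand[OF smooth]
    by (simp add: sum_subtractf algebra_simps)
  also have "\<dots> = - (real m + real CARD('n) * \<delta> + \<delta>) * S z"
    unfolding sum_commutators[OF smooth hom] shift by (simp add: algebra_simps)
  finally show ?thesis by (simp add: algebra_simps)
qed

section \<open>Powers of \<open>i(\<alpha>)\<close>\<close>

lemma i_alpha_diff_scale:
  assumes "smooth f" "smooth g"
  shows "i_alpha (\<lambda>z. f z - c * g z) = (\<lambda>z. i_alpha f z - c * i_alpha g z)"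
proof
  fix z
  have terms: "i_alpha_term i (\<lambda>z. f z - c * g z) z = i_alpha_term i f z - c * i_alpha_term i g z" for i
    unfolding i_alpha_term_def using assms
    by (simp add: pd_diff pd_mult smooth_differentiable_along smooth_intros differentiable_along_mult
        algebra_simps)
  have xit: "pd d_xit (\<lambda>z. f z - c * g z) z = pd d_xit f z - c * pd d_xit g z"
    using assms by (simp add: pd_diff pd_mult smooth_differentiable_along smooth_intros
        differentiable_along_mult)
  show "i_alpha (\<lambda>z. f z - c * g z) z = i_alpha f z - c * i_alpha g z"
    unfolding i_alpha_eq_terms terms xit by (simp add: sum_subtractf sum_distrib_left algebra_simps)
qed

lemma smooth_i_alpha_funpow: "smooth f \<Longrightarrow> smooth ((i_alpha ^^ l) f)"
  by (induction l) (auto simp: smooth_i_alpha)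

lemma i_alpha_funpow_diff_scale:
  assumes "smooth f" "smooth g"
  shows "(i_alpha ^^ l) (\<lambda>z. f z - c * g z) = (\<lambda>z. (i_alpha ^^ l) f z - c * (i_alpha ^^ l) g z)"
  by (induction l)
    (simp_all add: i_alpha_diff_scale smooth_i_alpha_funpow assms)

lemma i_alpha_zero: "i_alpha (\<lambda>z. 0) = (\<lambda>z. 0)"
  by (simp add: fun_eq_iff i_alpha_def)

lemma Xop_zero: "Xop \<delta> k (\<lambda>z. 0) = (\<lambda>z. 0)"
  by (simp add: fun_eq_iff Xop_def Dop_def Es_def)

text \<open>The commutator identity writes \<open>i(\<alpha>)^(l+2) X S\<close> through \<open>i(\<alpha>)^(l+1) X (i(\<alpha>) S)\<close>
  and \<open>i(\<alpha>)^(l+1) S\<close>, so the induction on \<open>l\<close> runs over all degrees at once.\<close>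

lemma i_alpha_funpow_Xop_eq_0:
  fixes S :: "'n::finite sym"
  assumes "S \<in> Rsp \<delta> m" "(i_alpha ^^ l) S = (\<lambda>_. 0)"
  shows "(i_alpha ^^ Suc l) (Xop \<delta> m S) = (\<lambda>_. 0)"
  using assms
proof (induction l arbitrary: m S)
  case 0
  then show ?case by (simp add: Xop_zero i_alpha_zero)
next
  case (Suc l)
  have smooth: "smooth S" and hom: "hom_poly_xi m S" using Suc.prems(1) by (auto simp: Rsp_def Sspace_def)
  have IH: "(i_alpha ^^ Suc l) (Xop \<delta> (m - 1) (i_alpha S)) = (\<lambda>_. 0)"
    using Suc.IH[OF Rsp_i_alpha[OF Suc.prems(1)]] Suc.prems(2)
    by (simp add: funpow_Suc_right del: funpow.simps)
  have comm: "i_alpha (Xop \<delta> m S) =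
      (\<lambda>z. Xop \<delta> (m - 1) (i_alpha S) z - (real m + real CARD('n) * \<delta> + \<delta>) * S z)"
    using i_alpha_Xop_commutator[OF smooth hom] by blast
  have "(i_alpha ^^ Suc (Suc l)) (Xop \<delta> m S) = (i_alpha ^^ Suc l) (i_alpha (Xop \<delta> m S))"
    by (simp only: funpow_Suc_right[of "Suc l"] comp_def)
  also have "\<dots> = (\<lambda>z. (i_alpha ^^ Suc l) (Xop \<delta> (m - 1) (i_alpha S)) z
      - (real m + real CARD('n) * \<delta> + \<delta>) * (i_alpha ^^ Suc l) S z)"
    unfolding comm by (rule i_alpha_funpow_diff_scale[OF smooth_Xop[OF smooth_i_alpha[OF smooth]] smooth])
  also have "\<dots> = (\<lambda>_. 0)"
    unfolding IH Suc.prems(2) by simp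
  finally show ?case .
qed

theorem proposition6p1:
  fixes \<delta> :: real and k l :: nat
  assumes "1 \<le> k" and "1 \<le> l" and "l \<le> k + 1"
  shows "i_alpha ` (Fsp \<delta> k l :: ('n::finite) sym set) \<subseteq> Fsp \<delta> (k - 1) (l - 1)
     \<and> Xop \<delta> (k - 1) ` (Fsp \<delta> (k - 1) (l - 1) :: ('n::finite) sym set) \<subseteq> Fsp \<delta> k l"
proof
  obtain l' where l': "l = Suc l'" using assms(2) by (cases l) auto
  show "i_alpha ` (Fsp \<delta> k l :: 'n sym set) \<subseteq> Fsp \<delta> (k - 1) (l - 1)"
    using Rsp_i_alpha by (auto simp: Fsp_def l' funpow_Suc_right simp del: funpow.simps)
  show "Xop \<delta> (k - 1) ` (Fsp \<delta> (k - 1) (l - 1) :: 'n sym set) \<subseteq> Fsp \<delta> k l"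
    using Rsp_Xop[of _ \<delta> "k - 1"] i_alpha_funpow_Xop_eq_0 assms(1) by (auto simp: Fsp_def l')
qed

end
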